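(* Let $\mathcal{G}$ be a DAG and $K$ a set of nodes. Let $p_1$ be a path from $a$ to $b$ and $p_2$ a path from $c$ to $d$, both open given $K$, and suppose they intersect. Let $i$ be the node on $p_1$ closest to $a$ at which $p_1$ and $p_2$ intersect, and let $p=p_1(a,i)\oplus p_2(i,d)$. Then $p$ is closed given $K$ if and only if $K\cap\mathrm{de}(i)=\emptyset$ and $i$ is a collider on $p$.
   Context: A path is a sequence of distinct nodes with consecutive nodes adjacent; for a path $p$ through nodes $u$ and $v$, $p(u,v)$ is its subpath from $u$ to $v$, and $p\oplus q$ is the concatenation of a path ending at a node with a path starting at that node. A node $k$ on a path is a collider if the path has consecutive edges $u\to k\leftarrow w$, otherwise a non-collider. $\mathrm{de}(i)$ is the set of descendants of $i$, i.e. nodes reachable by a directed path from $i$, where by convention $i\in\mathrm{de}(i)$. A path is open given $K$ if every non-collider on it is outside $K$ and every collider on it has a descendant in $K$; otherwise it is closed given $K$. *)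

theory Defs
  imports Main
begin

text \<open>A directed graph is given by a node set V and an edge relation E,
  where (u,v) \<in> E means u \<rightarrow> v.\<close>

definition is_dag :: "'a set \<Rightarrow> ('a \<times> 'a) set \<Rightarrow> bool" where
  "is_dag V E \<longleftrightarrow> finite V \<and> E \<subseteq> V \<times> V \<and> acyclic E"

definition adjacent :: "('a \<times> 'a) set \<Rightarrow> 'a \<Rightarrow> 'a \<Rightarrow> bool" where
  "adjacent E u v \<longleftrightarrow> (u, v) \<in> E \<or> (v, u) \<in> E"

definition is_path :: "'a set \<Rightarrow> ('a \<times> 'a) set \<Rightarrow> 'a list \<Rightarrow> bool" where
  "is_path V E p \<longleftrightarrow> p \<noteq> [] \<and> distinct p \<and> set p \<subseteq> V \<and>
     (\<forall>j. Suc j < length p \<longrightarrow> adjacent E (p ! j) (p ! Suc j))"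

definition path_from_to :: "'a set \<Rightarrow> ('a \<times> 'a) set \<Rightarrow> 'a list \<Rightarrow> 'a \<Rightarrow> 'a \<Rightarrow> bool" where
  "path_from_to V E p u v \<longleftrightarrow> is_path V E p \<and> hd p = u \<and> last p = v"

definition pos :: "'a list \<Rightarrow> 'a \<Rightarrow> nat" where
  "pos p u = (THE j. j < length p \<and> p ! j = u)"

definition subpath :: "'a list \<Rightarrow> 'a \<Rightarrow> 'a \<Rightarrow> 'a list" where
  "subpath p u v =
     (if pos p u \<le> pos p v then take (pos p v - pos p u + 1) (drop (pos p u) p)
      else rev (take (pos p u - pos p v + 1) (drop (pos p v) p)))"

text \<open>Concatenation p \<oplus> q of a path ending at a node with a path starting at it.\<close>
definition path_concat :: "'a list \<Rightarrow> 'a list \<Rightarrow> 'a list" (infixr "\<oplus>\<^sub>p" 65) where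
  "p \<oplus>\<^sub>p q = p @ tl q"

definition is_collider :: "('a \<times> 'a) set \<Rightarrow> 'a list \<Rightarrow> 'a \<Rightarrow> bool" where
  "is_collider E p k \<longleftrightarrow> (\<exists>j. 0 < j \<and> Suc j < length p \<and> p ! j = k \<and>
       (p ! (j - 1), k) \<in> E \<and> (p ! Suc j, k) \<in> E)"

definition de :: "('a \<times> 'a) set \<Rightarrow> 'a \<Rightarrow> 'a set" where
  "de E i = {j. (i, j) \<in> E\<^sup>*}"

definition open_given :: "('a \<times> 'a) set \<Rightarrow> 'a set \<Rightarrow> 'a list \<Rightarrow> bool" where
  "open_given E K p \<longleftrightarrow>
     (\<forall>k \<in> set p. (\<not> is_collider E p k \<longrightarrow> k \<notin> K) \<and>
                  (is_collider E p k \<longrightarrow> de E k \<inter> K \<noteq> {}))"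

definition closed_given :: "('a \<times> 'a) set \<Rightarrow> 'a set \<Rightarrow> 'a list \<Rightarrow> bool" where
  "closed_given E K p \<longleftrightarrow> \<not> open_given E K p"

end

theory Submission
  imports Defs
begin

text \<open>On p = p1(a,i) \<oplus> p2(i,d) every node other than i has the same neighbours as on p1 or
  on p2, so it is blocked neither on p nor on the open path it comes from. At i itself,
  if i \<in> K then i is a collider on both p1 and p2, hence (its neighbours on p being its
  predecessor on p1 and its successor on p2) also on p, and i \<in> de(i) \<inter> K keeps it open.
  So p can only be blocked by i being a collider with no descendant in K.\<close>

definition collider_at :: "('a \<times> 'a) set \<Rightarrow> 'a list \<Rightarrow> nat \<Rightarrow> bool" where
  "collider_at E p j \<longleftrightarrow>
     0 < j \<and> Suc j < length p \<and> (p ! (j - 1), p ! j) \<in> E \<and> (p ! Suc j, p ! j) \<in> E"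

lemma pos_nth: "distinct xs \<Longrightarrow> j < length xs \<Longrightarrow> pos xs (xs ! j) = j"
  unfolding pos_def by (rule the_equality) (auto simp: nth_eq_iff_index_eq)

lemma pos_less_length: "distinct xs \<Longrightarrow> x \<in> set xs \<Longrightarrow> pos xs x < length xs"
  by (metis in_set_conv_nth pos_nth)

lemma nth_pos: "distinct xs \<Longrightarrow> x \<in> set xs \<Longrightarrow> xs ! pos xs x = x"
  by (metis in_set_conv_nth pos_nth)

lemma pos_less_if_in_set_take: "distinct xs \<Longrightarrow> x \<in> set (take n xs) \<Longrightarrow> pos xs x < n"
  by (metis in_set_conv_nth length_take min_less_iff_conj nth_take pos_nth)

lemma is_collider_nth_iff:
  "distinct p \<Longrightarrow> j < length p \<Longrightarrow> is_collider E p (p ! j) \<longleftrightarrow> collider_at E p j"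
  unfolding is_collider_def collider_at_def by (metis Suc_lessD nth_eq_iff_index_eq)

lemma open_given_iff_nth:
  assumes "distinct p"
  shows "open_given E K p \<longleftrightarrow>
    (\<forall>j<length p. (\<not> collider_at E p j \<longrightarrow> p ! j \<notin> K) \<and>
                  (collider_at E p j \<longrightarrow> de E (p ! j) \<inter> K \<noteq> {}))"
  unfolding open_given_def using is_collider_nth_iff[OF assms, of _ E]
  by (metis in_set_conv_nth)

lemma subpath_from_hd:
  assumes "distinct p" "p \<noteq> []" "i \<in> set p"
  shows "subpath p (hd p) i = take (Suc (pos p i)) p"
proof -
  have "pos p (hd p) = 0" using pos_nth[OF assms(1), of 0] assms(2) by (simp add: hd_conv_nth)
  then show ?thesis unfolding subpath_def by simp
qed

lemma subpath_to_last:
  assumes "distinct p" "p \<noteq> []" "i \<in> set p"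
  shows "subpath p i (last p) = drop (pos p i) p"
proof -
  have "pos p (last p) = length p - 1"
    using pos_nth[OF assms(1), of "length p - 1"] assms(2) by (simp add: last_conv_nth)
  then show ?thesis using pos_less_length[OF assms(1,3)] unfolding subpath_def by auto
qed

context
  fixes p q :: "'a list" and n m :: nat
  assumes n: "n < length p" and m: "m < length q" and junction: "p ! n = q ! m"
begin

lemma path_concat_take_drop: "take (Suc n) p \<oplus>\<^sub>p drop m q = take n p @ drop m q"
  using n m junction by (simp add: path_concat_def take_Suc_conv_app_nth Cons_nth_drop_Suc[symmetric])

lemma nth_splice_left: "k \<le> n \<Longrightarrow> (take n p @ drop m q) ! k = p ! k"
  using n m junction by (cases "k = n") (auto simp: nth_append)

lemma nth_splice_right: "n \<le> k \<Longrightarrow> (take n p @ drop m q) ! k = q ! (m + k - n)"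
  using n m junction by (cases "k = n") (auto simp: nth_append)

lemma collider_at_splice_left:
  "j < n \<Longrightarrow> collider_at E (take n p @ drop m q) j \<longleftrightarrow> collider_at E p j"
  using n m nth_splice_left unfolding collider_at_def by auto

lemma collider_at_splice_right:
  "n < j \<Longrightarrow> collider_at E (take n p @ drop m q) j \<longleftrightarrow> collider_at E q (m + j - n)"
  using n m nth_splice_right unfolding collider_at_def by (auto simp: Suc_diff_le)

lemma collider_at_splice_junction:
  "collider_at E p n \<Longrightarrow> collider_at E q m \<Longrightarrow> collider_at E (take n p @ drop m q) n"
  using n m junction nth_splice_left[of "n - 1"] nth_splice_left[of n] nth_splice_right[of "Suc n"]
  unfolding collider_at_def by auto

lemma open_given_splice_iff:
  assumes "distinct p" "distinct q" "distinct (take n p @ drop m q)"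
    and "open_given E K p" "open_given E K q"
  shows "open_given E K (take n p @ drop m q) \<longleftrightarrow>
    \<not> (K \<inter> de E (p ! n) = {} \<and> collider_at E (take n p @ drop m q) n)"
    (is "open_given E K ?s \<longleftrightarrow> _")
proof
  assume "open_given E K ?s"
  moreover have "n < length ?s" using n m by simp
  ultimately have "collider_at E ?s n \<longrightarrow> de E (?s ! n) \<inter> K \<noteq> {}"
    unfolding open_given_iff_nth[OF assms(3)] by blast
  then show "\<not> (K \<inter> de E (p ! n) = {} \<and> collider_at E ?s n)"
    using nth_splice_left[of n] by auto
next
  assume unblocked: "\<not> (K \<inter> de E (p ! n) = {} \<and> collider_at E ?s n)"
  have open_p: "\<And>j. j < length p \<Longrightarrow> (\<not> collider_at E p j \<longrightarrow> p ! j \<notin> K) \<and>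
      (collider_at E p j \<longrightarrow> de E (p ! j) \<inter> K \<noteq> {})"
    using assms(4) unfolding open_given_iff_nth[OF assms(1)] by blast
  have open_q: "\<And>j. j < length q \<Longrightarrow> (\<not> collider_at E q j \<longrightarrow> q ! j \<notin> K) \<and>
      (collider_at E q j \<longrightarrow> de E (q ! j) \<inter> K \<noteq> {})"
    using assms(5) unfolding open_given_iff_nth[OF assms(2)] by blast
  have "(\<not> collider_at E ?s j \<longrightarrow> ?s ! j \<notin> K) \<and> (collider_at E ?s j \<longrightarrow> de E (?s ! j) \<inter> K \<noteq> {})"
    if j: "j < length ?s" for j
  proof -
    consider "j < n" | "j = n" | "n < j" by linarith
    then show ?thesis
    proof cases
      case 1
      then show ?thesis using open_p[of j] n nth_splice_left[of j] collider_at_splice_left by simp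
    next
      case 3
      have "m + j - n < length q" using 3 j n by auto
      then show ?thesis using open_q 3 nth_splice_right[of j] collider_at_splice_right by simp
    next
      case 2
      have "collider_at E ?s n" if "p ! n \<in> K"
        using that open_p[OF n] open_q[OF m] junction collider_at_splice_junction by auto
      then show ?thesis using 2 unblocked nth_splice_left[of n] by (auto simp: de_def)
    qed
  qed
  then show "open_given E K ?s" unfolding open_given_iff_nth[OF assms(3)] by blast
qed

end

theorem lemma6p3:
  fixes V :: "'a set" and E :: "('a \<times> 'a) set" and K :: "'a set"
    and p1 p2 :: "'a list" and a b c d i :: 'a
  assumes "is_dag V E"
    and "path_from_to V E p1 a b" and "path_from_to V E p2 c d"
    and "open_given E K p1" and "open_given E K p2"
    and "set p1 \<inter> set p2 \<noteq> {}"
    and "i \<in> set p1" and "i \<in> set p2"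
    and "\<forall>x \<in> set p1. pos p1 x < pos p1 i \<longrightarrow> x \<notin> set p2"
  shows "closed_given E K (subpath p1 a i \<oplus>\<^sub>p subpath p2 i d) \<longleftrightarrow>
           (K \<inter> de E i = {} \<and> is_collider E (subpath p1 a i \<oplus>\<^sub>p subpath p2 i d) i)"
proof -
  have p1: "distinct p1" "p1 \<noteq> []" "hd p1 = a" and p2: "distinct p2" "p2 \<noteq> []" "last p2 = d"
    using assms(2,3) unfolding path_from_to_def is_path_def by auto
  define n m where "n = pos p1 i" and "m = pos p2 i"
  have n: "n < length p1" "p1 ! n = i" and m: "m < length p2" "p2 ! m = i"
    using pos_less_length[OF p1(1) assms(7)] nth_pos[OF p1(1) assms(7)]
      pos_less_length[OF p2(1) assms(8)] nth_pos[OF p2(1) assms(8)] unfolding n_def m_def by auto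
  have concat: "subpath p1 a i \<oplus>\<^sub>p subpath p2 i d = take n p1 @ drop m p2"
    using subpath_from_hd[OF p1(1,2) assms(7)] subpath_to_last[OF p2(1,2) assms(8)]
      path_concat_take_drop[OF n(1) m(1)] p1(3) p2(3) n(2) m(2) unfolding n_def m_def by simp
  have "set (take n p1) \<inter> set p2 = {}"
    using assms(9) pos_less_if_in_set_take[OF p1(1)] in_set_takeD unfolding n_def by fast
  then have distinct: "distinct (take n p1 @ drop m p2)"
    using p1(1) p2(1) by (auto dest: in_set_dropD)
  have "is_collider E (take n p1 @ drop m p2) i \<longleftrightarrow> collider_at E (take n p1 @ drop m p2) n"
    using is_collider_nth_iff[OF distinct, of n] nth_splice_left[OF n(1) m(1)] n m by simp
  then show ?thesis
    using open_given_splice_iff[OF n(1) m(1) _ p1(1) p2(1) distinct assms(4,5)] n m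
    unfolding concat closed_given_def by auto
qed

end
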